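(* Let $S_j$ be local potentials satisfying (A)–(E). For every $\omega\in\mathbb{R}^d$ there exists a global minimizer $x\in\overline{\mathcal{B}}_\omega$, i.e. a Birkhoff global minimizer with rotation vector $\omega$ such that $\tau_{k,l}x=x$ for all $(k,l)\in\mathbb{Z}^d\times\mathbb{Z}$ with $\langle\omega,k\rangle+l=0$.
   Context: Notation: $\|i\|=\sum_{k=1}^d|i_k|$, $B_j^r=\{k:\|k-j\|\le r\}$, $(\tau_{k,l}x)_i=x_{i+k}+l$. Local potentials $S_j:\mathbb{R}^{\mathbb{Z}^d}\to\mathbb{R}$, $j\in\mathbb{Z}^d$, satisfy: (A) there is $r\in(0,\infty)$ and $C^2$ functions $s_j:\mathbb{R}^{B_j^r}\to\mathbb{R}$ with $S_j(x)=s_j(x|_{B_j^r})$; (B) $S_j(\tau_{k,l}x)=S_{j+k}(x)$; (C) each $S_j$ is bounded below and $S_j(x)\to\infty$ as $|x_k-x_j|\to\infty$ whenever $\|k-j\|=1$; (D) $\partial_{i,k}S_j\le0$ for $i\ne k$, and $\partial_{i,k}S_i<0$ when $\|i-k\|=1$; (E) $|\partial_{i,k}S_j|\le C$ uniformly. A configuration $x$ is Birkhoff if for every $(k,l)$, $\tau_{k,l}x\ge x$ or $\tau_{k,l}x\le x$ (pointwise order). $\omega$ is the rotation vector of $x$ if $\lim_{n\to\infty}x_{ni}/n=\langle\omega,i\rangle$ for all $i$. $\overline{\mathcal{B}}_\omega$ is the set of Birkhoff configurations with rotation vector $\omega$ satisfying $\tau_{k,l}x=x$ whenever $\langle\omega,k\rangle+l=0$.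 For finite $B$: $W_B=\sum_{j\in B}S_j$, $\mathring{B}^{(r)}=\{i\in B:B_i^r\subset B\}$; $x$ is a global minimizer if $W_B(x+y)\ge W_B(x)$ for all finite $B$ and all $y$ supported in $\mathring{B}^{(r)}$. *)

theory Defs
  imports "HOL-Analysis.Analysis"
begin

(* Lattice points Z^d are int ^ 'd ('d a finite index type, d = CARD('d));
   configurations are maps (int ^ 'd) \<Rightarrow> real. *)

type_synonym 'd config = "int ^ 'd \<Rightarrow> real"

definition norm1 :: "int ^ 'd::finite \<Rightarrow> int" where
  "norm1 i = (\<Sum>k\<in>UNIV. \<bar>i $ k\<bar>)"

definition lball :: "int ^ 'd::finite \<Rightarrow> real \<Rightarrow> (int ^ 'd) set" where
  "lball j r = {k. real_of_int (norm1 (k - j)) \<le> r}"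

definition tau :: "int ^ 'd::finite \<Rightarrow> int \<Rightarrow> 'd config \<Rightarrow> 'd config" where
  "tau k l x = (\<lambda>i. x (i + k) + real_of_int l)"

definition ip :: "real ^ 'd::finite \<Rightarrow> int ^ 'd \<Rightarrow> real" where
  "ip \<omega> k = (\<Sum>m\<in>UNIV. \<omega> $ m * real_of_int (k $ m))"

definition pd :: "'i \<Rightarrow> (('i \<Rightarrow> real) \<Rightarrow> real) \<Rightarrow> ('i \<Rightarrow> real) \<Rightarrow> real" where
  "pd i F x = deriv (\<lambda>t. F (x(i := x i + t))) 0"

(* C^2: all partial derivatives of order \<le> 2 exist and are continuous
   (continuity w.r.t. the product topology; for functions depending on finitely
   many coordinates this is ordinary C^2 on R^B) *)
definition C2 :: "(('i \<Rightarrow> real) \<Rightarrow> real) \<Rightarrow> bool" where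
  "C2 F \<longleftrightarrow> continuous_on UNIV F
     \<and> (\<forall>i x. (\<lambda>t. F (x(i := x i + t))) differentiable (at 0))
     \<and> (\<forall>i. continuous_on UNIV (pd i F))
     \<and> (\<forall>i k x. (\<lambda>t. pd k F (x(i := x i + t))) differentiable (at 0))
     \<and> (\<forall>i k. continuous_on UNIV (pd i (pd k F)))"

definition birkhoff :: "'d::finite config \<Rightarrow> bool" where
  "birkhoff x \<longleftrightarrow> (\<forall>k l. tau k l x \<ge> x \<or> tau k l x \<le> x)"

definition has_rotation_vector :: "'d::finite config \<Rightarrow> real ^ 'd \<Rightarrow> bool" where
  "has_rotation_vector x \<omega> \<longleftrightarrow>
     (\<forall>i. (\<lambda>n::nat. x (of_nat n *s i) / real n) \<longlonglongrightarrow> ip \<omega> i)"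

definition Bbar :: "real ^ 'd::finite \<Rightarrow> 'd config set" where
  "Bbar \<omega> = {x. birkhoff x \<and> has_rotation_vector x \<omega> \<and>
                 (\<forall>k l. ip \<omega> k + real_of_int l = 0 \<longrightarrow> tau k l x = x)}"

definition WB :: "(int ^ 'd::finite \<Rightarrow> 'd config \<Rightarrow> real) \<Rightarrow> (int ^ 'd) set \<Rightarrow> 'd config \<Rightarrow> real" where
  "WB S B x = (\<Sum>j\<in>B. S j x)"

definition interior_r :: "(int ^ 'd::finite) set \<Rightarrow> real \<Rightarrow> (int ^ 'd) set" where
  "interior_r B r = {i\<in>B. lball i r \<subseteq> B}"

definition global_minimizer ::
  "(int ^ 'd::finite \<Rightarrow> 'd config \<Rightarrow> real) \<Rightarrow> real \<Rightarrow> 'd config \<Rightarrow> bool" where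
  "global_minimizer S r x \<longleftrightarrow>
     (\<forall>B y. finite B \<longrightarrow> (\<forall>i. i \<notin> interior_r B r \<longrightarrow> y i = 0) \<longrightarrow>
        WB S B (\<lambda>i. x i + y i) \<ge> WB S B x)"

end

theory Submission
  imports Defs "HOL-Analysis.Function_Metric"
begin

(* The argument follows the classical Aubry--Mather scheme.
   (1) Hypothesis (D) makes every S_j submodular:
       S_j(min x z) + S_j(max x z) <= S_j x + S_j z.
   (2) For a rational rotation vector P/Q, a minimizer of the action over one
       period cell exists among (Q,P)-periodic configurations (coercivity (C)
       gives a compact sublevel set). Submodularity makes these minimizers
       closed under min; taking the infimum of all translates tau k l x with
       <P/Q,k> + l >= 0 yields an "ordered" periodic minimizer, which is
       Birkhoff and has rotation vector P/Q.
   (3) A periodic minimizer is a local minimizer for every perturbation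
       supported well inside one period cell.
   (4) Approximating omega by P_n/Q_n with Q_n -> infinity, a pointwise limit of
       the ordered periodic minimizers is a Birkhoff local minimizer whose
       increments are within 1 of <omega,k>; the infimum construction once more
       produces an ordered minimizer, hence an element of Bbar omega. *)

lemma tendsto_fun_iff:
  fixes f :: "'b \<Rightarrow> 'a \<Rightarrow> real"
  shows "(f \<longlongrightarrow> l) F \<longleftrightarrow> (\<forall>i. ((\<lambda>n. f n i) \<longlongrightarrow> l i) F)"
proof -
  have "(f \<longlongrightarrow> l) F \<longleftrightarrow> limitin (product_topology (\<lambda>i. euclidean) UNIV) f l F"
    by (simp add: euclidean_product_topology limitin_canonical_iff)
  also have "\<dots> \<longleftrightarrow> (\<forall>i. ((\<lambda>n. f n i) \<longlongrightarrow> l i) F)"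
    by (simp add: limitin_componentwise limitin_canonical_iff)
  finally show ?thesis .
qed

lemma compact_PiE_Icc: "compact (PiE UNIV (\<lambda>i. {- b i .. (b i::real)}))"
proof -
  have "compactin (product_topology (\<lambda>i. euclidean) UNIV) (PiE UNIV (\<lambda>i. {- b i .. (b i::real)}))"
    by (simp add: compactin_PiE)
  thus ?thesis by (simp add: euclidean_product_topology compactin_euclidean_iff)
qed

subsection \<open>Submodularity from nonpositive mixed partial derivatives\<close>

lemma line_deriv:
  assumes "\<forall>i x. (\<lambda>t. F (x(i := x i + t))) differentiable (at (0::real))"
  shows "((\<lambda>t. F (y(i := t))) has_real_derivative pd i F (y(i := t0))) (at t0)"
proof -
  let ?y = "y(i := t0)"
  have "(\<lambda>t. F (?y(i := ?y i + t))) differentiable (at 0)" using assms by blast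
  hence "((\<lambda>t. F (?y(i := ?y i + t))) has_real_derivative pd i F ?y) (at 0)"
    unfolding pd_def using DERIV_deriv_iff_real_differentiable by blast
  hence "((\<lambda>t. F (y(i := t + t0))) has_real_derivative pd i F ?y) (at 0)"
    by (simp add: add.commute)
  thus ?thesis using DERIV_shift[of "\<lambda>t. F (y(i := t))" "pd i F ?y" 0 t0] by simp
qed

lemma mixed_increment_antitone:
  assumes C: "C2 F" and D: "\<And>i k x. i \<noteq> k \<Longrightarrow> pd i (pd k F) x \<le> 0"
    and ik: "i \<noteq> k" and a: "a \<le> a'" and b: "b \<le> (b'::real)"
  shows "F (y(k := b', i := a')) - F (y(k := b', i := a))
       \<le> F (y(k := b, i := a')) - F (y(k := b, i := a))"
proof -
  have d1: "\<forall>i x. (\<lambda>t. F (x(i := x i + t))) differentiable (at 0)"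
    using C unfolding C2_def by blast
  have d2: "\<forall>k x. (\<lambda>t. pd i F (x(k := x k + t))) differentiable (at 0)"
    using C unfolding C2_def by blast
  have pd_antitone: "pd i F (y(k := b', i := t)) \<le> pd i F (y(k := b, i := t))" for t
  proof -
    have e: "y(k := s, i := t) = (y(i := t))(k := s)" for s using ik by (simp add: fun_upd_twist)
    have "(\<lambda>s. pd i F ((y(i := t))(k := s))) b' \<le> (\<lambda>s. pd i F ((y(i := t))(k := s))) b"
    proof (rule DERIV_nonpos_imp_nonincreasing[OF b])
      fix s
      show "\<exists>z. ((\<lambda>s. pd i F ((y(i := t))(k := s))) has_real_derivative z) (at s) \<and> z \<le> 0"
        using line_deriv[OF d2, of "y(i := t)" k s] D[of k i "y(i := t, k := s)"] ik by blast
    qed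
    thus ?thesis by (simp add: e)
  qed
  define phi where "phi t = F (y(k := b', i := t)) - F (y(k := b, i := t))" for t
  have "phi a' \<le> phi a"
  proof (rule DERIV_nonpos_imp_nonincreasing[OF a])
    fix t
    have "(phi has_real_derivative pd i F (y(k := b', i := t)) - pd i F (y(k := b, i := t))) (at t)"
      unfolding phi_def by (intro DERIV_diff line_deriv[OF d1])
    thus "\<exists>z. (phi has_real_derivative z) (at t) \<and> z \<le> 0"
      using pd_antitone[of t] by force
  qed
  thus ?thesis unfolding phi_def by simp
qed

lemma increment_antitone:
  assumes C: "C2 F" and D: "\<And>i k x. i \<noteq> k \<Longrightarrow> pd i (pd k F) x \<le> 0"
    and B: "finite B" and iB: "i \<notin> B" and le: "\<forall>j. y j \<le> y' j"
    and eq: "\<forall>j. j \<notin> B \<longrightarrow> y' j = y j" and a: "a \<le> (a'::real)"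
  shows "F (y'(i := a')) - F (y'(i := a)) \<le> F (y(i := a')) - F (y(i := a))"
  using B iB le eq
proof (induction B arbitrary: y' rule: finite_induct)
  case empty
  hence "y' = y" by auto
  thus ?case by simp
next
  case (insert k B)
  define y'' where "y'' = y'(k := y k)"
  have IH: "F (y''(i := a')) - F (y''(i := a)) \<le> F (y(i := a')) - F (y(i := a))"
    using insert by (intro insert.IH) (auto simp: y''_def)
  have ik: "i \<noteq> k" using insert by auto
  have "F (y''(k := y' k, i := a')) - F (y''(k := y' k, i := a))
      \<le> F (y''(k := y k, i := a')) - F (y''(k := y k, i := a))"
    using insert by (intro mixed_increment_antitone[OF C D ik a]) auto
  moreover have "y''(k := y' k) = y'" "y''(k := y k) = y''" by (auto simp: y''_def)
  ultimately have "F (y'(i := a')) - F (y'(i := a)) \<le> F (y''(i := a')) - F (y''(i := a))"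
    by metis
  thus ?case using IH by linarith
qed

lemma submodular_finite_difference:
  assumes C: "C2 F" and D: "\<And>i k x. i \<noteq> k \<Longrightarrow> pd i (pd k F) x \<le> 0"
    and L: "finite L" and eq: "\<forall>j. j \<notin> L \<longrightarrow> z j = x j"
  shows "F (\<lambda>j. min (x j) (z j)) + F (\<lambda>j. max (x j) (z j)) \<le> F x + F z"
  using L eq
proof (induction L arbitrary: z rule: finite_induct)
  case empty
  hence "z = x" by auto
  thus ?case by (simp add: min_def max_def)
next
  case (insert i L)
  define z1 where "z1 = z(i := x i)"
  have IH: "F (\<lambda>j. min (x j) (z1 j)) + F (\<lambda>j. max (x j) (z1 j)) \<le> F x + F z1"
    using insert by (intro insert.IH) (auto simp: z1_def)
  have zz: "z = z1(i := z i)" and z1: "z1(i := x i) = z1" by (auto simp: z1_def)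
  show ?case
  proof (cases "x i \<le> z i")
    case True
    have m1: "(\<lambda>j. min (x j) (z j)) = (\<lambda>j. min (x j) (z1 j))"
      and m2: "(\<lambda>j. max (x j) (z j)) = (\<lambda>j. max (x j) (z1 j))(i := z i)"
      and m3: "(\<lambda>j. max (x j) (z1 j))(i := x i) = (\<lambda>j. max (x j) (z1 j))"
      using True by (auto simp: z1_def)
    have "F ((\<lambda>j. max (x j) (z1 j))(i := z i)) - F ((\<lambda>j. max (x j) (z1 j))(i := x i))
        \<le> F (z1(i := z i)) - F (z1(i := x i))"
      using insert True by (intro increment_antitone[OF C D, of L]) (auto simp: z1_def)
    thus ?thesis using IH m1 m2 m3 z1 zz by simp
  next
    case False
    have m1: "(\<lambda>j. min (x j) (z j)) = (\<lambda>j. min (x j) (z1 j))(i := z i)"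
      and m2: "(\<lambda>j. max (x j) (z j)) = (\<lambda>j. max (x j) (z1 j))"
      and m3: "(\<lambda>j. min (x j) (z1 j))(i := x i) = (\<lambda>j. min (x j) (z1 j))"
      using False by (auto simp: z1_def)
    have "F (z1(i := x i)) - F (z1(i := z i))
        \<le> F ((\<lambda>j. min (x j) (z1 j))(i := x i)) - F ((\<lambda>j. min (x j) (z1 j))(i := z i))"
      using insert False by (intro increment_antitone[OF C D, of L]) (auto simp: z1_def)
    thus ?thesis using IH m1 m2 m3 z1 zz by simp
  qed
qed


section \<open>Lattice geometry\<close>

lemma finite_int_box: "finite {u :: int^'d::finite. \<forall>m. a m \<le> u$m \<and> u$m \<le> b m}"
proof -
  have "{u :: int^'d. \<forall>m. a m \<le> u$m \<and> u$m \<le> b m} \<subseteq> vec_lambda ` (PiE UNIV (\<lambda>m. {a m..b m}))"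
  proof
    fix u :: "int^'d" assume "u \<in> {u. \<forall>m. a m \<le> u$m \<and> u$m \<le> b m}"
    hence "(\<lambda>m. u$m) \<in> PiE UNIV (\<lambda>m. {a m..b m})" by auto
    moreover have "u = vec_lambda (\<lambda>m. u$m)" by simp
    ultimately show "u \<in> vec_lambda ` (PiE UNIV (\<lambda>m. {a m..b m}))" by blast
  qed
  moreover have "finite (PiE (UNIV::'d set) (\<lambda>m. {a m..b m}))" by (intro finite_PiE) auto
  ultimately show ?thesis by (meson finite_imageI finite_subset)
qed

lemma comp_le_norm1: "\<bar>v $ m\<bar> \<le> norm1 v"
  unfolding norm1_def by (rule member_le_sum[of m UNIV "\<lambda>k. \<bar>v$k\<bar>"]) auto

lemma norm1_nonneg: "0 \<le> norm1 v"
  unfolding norm1_def by (rule sum_nonneg) auto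

lemma norm1_minus_commute: "norm1 (a - b) = norm1 (b - a)"
  unfolding norm1_def by (intro sum.cong) auto

lemma norm1_zero_iff: "norm1 v = 0 \<longleftrightarrow> v = 0"
proof
  assume "norm1 v = 0"
  hence "\<forall>m\<in>UNIV. \<bar>v$m\<bar> = 0" unfolding norm1_def by (subst sum_nonneg_eq_0_iff[symmetric]) auto
  thus "v = 0" by (simp add: vec_eq_iff)
qed (simp add: norm1_def)

lemma norm1_bound_comp: "real_of_int (norm1 v) \<le> r \<Longrightarrow> \<bar>real_of_int (v$m)\<bar> \<le> r"
  using comp_le_norm1[of v m] by (metis of_int_abs of_int_le_iff order_trans)

lemma lball_finite: "finite (lball j (r::real))"
proof -
  have "lball j r \<subseteq> {u. \<forall>m. j$m - \<lceil>r\<rceil> \<le> u$m \<and> u$m \<le> j$m + \<lceil>r\<rceil>}"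
  proof
    fix u assume "u \<in> lball j r"
    hence "norm1 (u - j) \<le> \<lceil>r\<rceil>" by (simp add: lball_def; linarith)
    hence b: "\<bar>u$m - j$m\<bar> \<le> \<lceil>r\<rceil>" for m using comp_le_norm1[of "u - j" m] by simp
    have "j$m - \<lceil>r\<rceil> \<le> u$m \<and> u$m \<le> j$m + \<lceil>r\<rceil>" for m
      using b[of m] unfolding abs_le_iff by linarith
    thus "u \<in> {u. \<forall>m. j$m - \<lceil>r\<rceil> \<le> u$m \<and> u$m \<le> j$m + \<lceil>r\<rceil>}" by blast
  qed
  thus ?thesis using finite_int_box finite_subset by fastforce
qed

lemma finite_unit_sphere: "finite {u :: int^'d::finite. norm1 u = 1}"
proof -
  have "{u :: int^'d. norm1 u = 1} \<subseteq> {u. \<forall>m. -1 \<le> u$m \<and> u$m \<le> 1}"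
  proof
    fix u :: "int^'d" assume "u \<in> {u. norm1 u = 1}"
    hence "\<bar>u$m\<bar> \<le> 1" for m using comp_le_norm1[of u m] by simp
    thus "u \<in> {u. \<forall>m. -1 \<le> u$m \<and> u$m \<le> 1}" unfolding abs_le_iff by force
  qed
  thus ?thesis using finite_int_box finite_subset by fastforce
qed

lemma lattice_step_towards:
  assumes "i \<noteq> j"
  shows "\<exists>i'. norm1 (i - i') = 1 \<and> norm1 (i' - j) = norm1 (i - j) - 1"
proof -
  obtain m where m: "(i - j)$m \<noteq> 0" using assms by (auto simp: vec_eq_iff)
  define s where "s = sgn ((i - j)$m)"
  define i' where "i' = i - (\<chi> k. if k = m then s else 0)"
  have abs_s: "\<bar>s\<bar> = 1" using m by (simp add: s_def abs_sgn_eq_1)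
  have comp: "(i' - j)$k = (i - j)$k - (if k = m then s else 0)" for k
    by (simp add: i'_def)
  have "\<bar>(i' - j)$m\<bar> = \<bar>(i - j)$m\<bar> - 1"
    using comp[of m] m by (cases "(i - j)$m > 0") (auto simp: s_def sgn_if)
  moreover have "(\<Sum>k\<in>UNIV - {m}. \<bar>(i' - j)$k\<bar>) = (\<Sum>k\<in>UNIV - {m}. \<bar>(i - j)$k\<bar>)"
    using comp by (intro sum.cong refl) auto
  moreover have "norm1 v = \<bar>v$m\<bar> + (\<Sum>k\<in>UNIV - {m}. \<bar>v$k\<bar>)" for v
    unfolding norm1_def by (simp add: sum.remove)
  ultimately have "norm1 (i' - j) = norm1 (i - j) - 1" by (metis diff_add_eq)
  moreover have "norm1 (i - i') = 1"
    using abs_s by (simp add: norm1_def i'_def if_distrib cong: if_cong)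
  ultimately show ?thesis by blast
qed

lemma increment_bound:
  fixes x :: "int^'d::finite \<Rightarrow> real"
  assumes nb: "\<And>j k. norm1 (k - j) = 1 \<Longrightarrow> \<bar>x k - x j\<bar> \<le> R"
  shows "\<bar>x i - x j\<bar> \<le> R * real_of_int (norm1 (i - j))"
proof -
  have "nat (norm1 (i - j)) = n \<Longrightarrow> \<bar>x i - x j\<bar> \<le> R * real_of_int (norm1 (i - j))" for n
  proof (induction n arbitrary: i)
    case 0
    hence "norm1 (i - j) = 0" using norm1_nonneg[of "i - j"] by linarith
    thus ?case using norm1_zero_iff[of "i - j"] by simp
  next
    case (Suc n)
    hence "i \<noteq> j" by (auto simp: norm1_def)
    then obtain i' where i': "norm1 (i - i') = 1" "norm1 (i' - j) = norm1 (i - j) - 1"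
      using lattice_step_towards by blast
    have "\<bar>x i' - x j\<bar> \<le> R * real_of_int (norm1 (i' - j))"
      using Suc i' by (intro Suc.IH) simp
    moreover have "\<bar>x i - x i'\<bar> \<le> R" using nb i'(1) by (metis norm1_minus_commute)
    ultimately show ?case using i'(2) by (simp add: algebra_simps; linarith)
  qed
  thus ?thesis by blast
qed

section \<open>Translations and ordered configurations\<close>

lemma tau_tau: "tau k l (tau k' l' x) = tau (k + k') (l + l') x"
  by (auto simp: tau_def fun_eq_iff algebra_simps)

lemma tau_mono: "x \<le> y \<Longrightarrow> tau k l x \<le> tau k l y"
  by (auto simp: tau_def le_fun_def)

lemma ip_add: "ip w (a + b) = ip w a + ip w b"
  by (simp add: ip_def algebra_simps sum.distrib)

lemma ip_neg: "ip w (- a) = - ip w a"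
  by (simp add: ip_def sum_negf)

lemma ip_zero: "ip w 0 = 0" by (simp add: ip_def)

lemma ip_smult: "ip w (of_int c *s k) = real_of_int c * ip w k"
  by (simp add: ip_def sum_distrib_left algebra_simps)

definition ordered :: "real^'d::finite \<Rightarrow> 'd config \<Rightarrow> bool" where
  "ordered w x \<longleftrightarrow> (\<forall>k l. 0 \<le> ip w k + real_of_int l \<longrightarrow> x \<le> tau k l x)"

lemma ordered_rev:
  assumes o: "ordered w x" and h: "ip w k + real_of_int l \<le> 0"
  shows "tau k l x \<le> x"
proof (rule le_funI)
  fix i
  have "0 \<le> ip w (- k) + real_of_int (- l)" using h by (simp add: ip_neg)
  hence "x (i + k) \<le> tau (- k) (- l) x (i + k)" using o unfolding ordered_def le_fun_def by blast
  thus "tau k l x i \<le> x i" by (simp add: tau_def)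
qed

lemma ordered_increment:
  assumes o: "ordered w x"
  shows "\<bar>x (i + k) - x i - ip w k\<bar> \<le> 1"
proof -
  have "0 \<le> ip w k + real_of_int \<lceil>- ip w k\<rceil>" by linarith
  hence "x i \<le> x (i + k) + real_of_int \<lceil>- ip w k\<rceil>"
    using o unfolding ordered_def le_fun_def tau_def by blast
  moreover have "ip w k + real_of_int \<lfloor>- ip w k\<rfloor> \<le> 0" by linarith
  hence "x (i + k) + real_of_int \<lfloor>- ip w k\<rfloor> \<le> x i"
    using ordered_rev[OF o] unfolding le_fun_def tau_def by blast
  ultimately show ?thesis by (simp add: abs_le_iff; linarith)
qed

lemma rotation_vector_of_increment_bound:
  assumes e: "\<And>k. \<bar>x k - x 0 - ip w k\<bar> \<le> 1"
  shows "has_rotation_vector x w"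
  unfolding has_rotation_vector_def
proof (intro allI)
  fix i
  have "(\<lambda>n. (x (of_nat n *s i) - real n * ip w i) / real n) \<longlonglongrightarrow> 0"
  proof (rule Lim_null_comparison[of _ "\<lambda>n. (1 + \<bar>x 0\<bar>) / real n"])
    have "\<bar>x (of_nat n *s i) - real n * ip w i\<bar> \<le> 1 + \<bar>x 0\<bar>" for n
      using e[of "of_nat n *s i"] ip_smult[of w "int n" i] by simp
    thus "\<forall>\<^sub>F n in sequentially. norm ((x (of_nat n *s i) - real n * ip w i) / real n)
        \<le> (1 + \<bar>x 0\<bar>) / real n"
      by (intro always_eventually allI) (simp add: divide_right_mono)
  qed (rule lim_const_over_n)
  hence "(\<lambda>n. (x (of_nat n *s i) - real n * ip w i) / real n + ip w i) \<longlonglongrightarrow> 0 + ip w i"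
    by (intro tendsto_add) auto
  moreover have "\<forall>\<^sub>F n in sequentially.
      (x (of_nat n *s i) - real n * ip w i) / real n + ip w i = x (of_nat n *s i) / real n"
    using eventually_gt_at_top[of 0] by eventually_elim (simp add: field_simps)
  ultimately show "(\<lambda>n. x (of_nat n *s i) / real n) \<longlonglongrightarrow> ip w i"
    by (simp add: tendsto_cong[symmetric])
qed

lemma ordered_in_Bbar:
  assumes o: "ordered w x"
  shows "x \<in> Bbar w"
proof -
  have "birkhoff x"
    unfolding birkhoff_def using o ordered_rev[OF o] unfolding ordered_def by (meson linear)
  moreover have "has_rotation_vector x w"
    using ordered_increment[OF o, of 0] by (intro rotation_vector_of_increment_bound) simp
  moreover have "tau k l x = x" if "ip w k + real_of_int l = 0" for k l
    using that o ordered_rev[OF o, of k l] unfolding ordered_def by (simp add: order_antisym)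
  ultimately show ?thesis by (simp add: Bbar_def)
qed

lemma ordered_shift: "ordered w x \<Longrightarrow> ordered w (\<lambda>i. x i + c)"
  unfolding ordered_def le_fun_def tau_def by simp


definition running_min :: "(nat \<Rightarrow> 'a \<Rightarrow> real) \<Rightarrow> nat \<Rightarrow> 'a \<Rightarrow> real" where
  "running_min T n i = Min ((\<lambda>j. T j i) ` {..n})"

lemma running_min_0: "running_min T 0 = T 0"
  by (simp add: running_min_def fun_eq_iff)

lemma running_min_Suc: "running_min T (Suc n) = (\<lambda>i. min (running_min T n i) (T (Suc n) i))"
  by (simp add: running_min_def fun_eq_iff atMost_Suc min.commute)

lemma running_min_le: "j \<le> n \<Longrightarrow> running_min T n i \<le> T j i"
  unfolding running_min_def by (rule Min_le) auto

lemma running_min_attained: "\<exists>j\<le>n. running_min T n i = T j i"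
proof -
  have "Min ((\<lambda>j. T j i) ` {..n}) \<in> (\<lambda>j. T j i) ` {..n}" by (rule Min_in) auto
  thus ?thesis unfolding running_min_def by (metis atMost_iff imageE)
qed

lemma running_min_limit:
  assumes "\<And>n i. L i \<le> T n i"
  shows "\<exists>z. (\<forall>i. (\<lambda>n. running_min T n i) \<longlonglongrightarrow> z i) \<and> (\<forall>i j. z i \<le> T j i)"
proof -
  have "decseq (\<lambda>n. running_min T n i)" for i by (intro decseq_SucI) (simp add: running_min_Suc)
  moreover have "L i \<le> running_min T n i" for n i using running_min_attained[of n T i] assms by metis
  ultimately have "\<forall>i. \<exists>l. (\<lambda>n. running_min T n i) \<longlonglongrightarrow> l \<and> (\<forall>n. l \<le> running_min T n i)"
    by (metis decseq_convergent)
  then obtain z where z: "\<And>i. (\<lambda>n. running_min T n i) \<longlonglongrightarrow> z i" "\<And>i n. z i \<le> running_min T n i"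
    by metis
  have "z i \<le> T j i" for i j using z(2)[of i j] running_min_le[of j j T i] by simp
  thus ?thesis using z(1) by blast
qed

text \<open>The running minima over an
  enumeration of the translates converge to a configuration z below all of
  them; z is then below all its own H-translates, and z inherits every property
  Qp that holds for limits of sequences in G.\<close>
lemma ordered_infimum:
  fixes x :: "int^'d::finite \<Rightarrow> real" and H :: "((int^'d) \<times> int) set"
  assumes H0: "(0,0) \<in> H"
    and Hadd: "\<And>g h. g \<in> H \<Longrightarrow> h \<in> H \<Longrightarrow> (fst g + fst h, snd g + snd h) \<in> H"
    and Gt: "\<And>h. h \<in> H \<Longrightarrow> G (tau (fst h) (snd h) x)"
    and Gmin: "\<And>a b. G a \<Longrightarrow> G b \<Longrightarrow> G (\<lambda>i. min (a i) (b i))"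
    and Glim: "\<And>g z. (\<forall>N. G (g N)) \<Longrightarrow> (\<forall>i. (\<lambda>N. g N i) \<longlonglongrightarrow> z i) \<Longrightarrow> Qp z"
    and bnd: "\<And>h i. h \<in> H \<Longrightarrow> x i - C \<le> tau (fst h) (snd h) x i"
  shows "\<exists>z. Qp z \<and> (\<forall>h\<in>H. z \<le> tau (fst h) (snd h) z)"
proof -
  define e where "e = from_nat_into H"
  have He: "range e = H" unfolding e_def using H0 by (intro range_from_nat_into) auto
  have eH: "e n \<in> H" for n using He by blast
  define T where "T n = tau (fst (e n)) (snd (e n)) x" for n
  define g where "g = running_min T"
  have Gg: "G (g n)" for n
    by (induction n) (simp_all add: g_def running_min_0 running_min_Suc T_def eH Gt Gmin)
  obtain z where z: "\<And>i. (\<lambda>n. g n i) \<longlonglongrightarrow> z i" "\<And>i j. z i \<le> T j i"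
    using running_min_limit[of "\<lambda>i. x i - C" T] bnd eH unfolding g_def T_def by blast
  text \<open>Each value of g n, shifted by (k,l) \<in> H, is a value of another translate.\<close>
  have "z \<le> tau k l z" if h: "(k, l) \<in> H" for k l
  proof (rule le_funI)
    fix i
    have "z i \<le> g n (i + k) + real_of_int l" for n
    proof -
      obtain j where "g n (i + k) = T j (i + k)" using running_min_attained unfolding g_def by metis
      hence "g n (i + k) + real_of_int l = tau (k + fst (e j)) (l + snd (e j)) x i"
        by (simp add: T_def tau_def algebra_simps)
      also obtain j' where "e j' = (k + fst (e j), l + snd (e j))"
        using Hadd[OF h eH[of j]] He by (metis fst_conv rangeE snd_conv)
      hence "tau (k + fst (e j)) (l + snd (e j)) x i = T j' i" by (simp add: T_def)
      finally show ?thesis using z(2)[of i j'] by simp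
    qed
    moreover have "(\<lambda>n. g n (i + k) + real_of_int l) \<longlonglongrightarrow> z (i + k) + real_of_int l"
      using z(1) by (intro tendsto_add) auto
    ultimately have "z i \<le> z (i + k) + real_of_int l"
      by (intro LIMSEQ_le_const[of "\<lambda>n. g n (i + k) + real_of_int l"]) auto
    thus "z i \<le> tau k l z i" by (simp add: tau_def)
  qed
  moreover have "Qp z" using Glim[of g z] Gg z(1) by blast
  ultimately show ?thesis by auto
qed

definition nonneg_shifts :: "real^'d::finite \<Rightarrow> ((int^'d) \<times> int) set" where
  "nonneg_shifts w = {h. 0 \<le> ip w (fst h) + real_of_int (snd h)}"

lemma nonneg_shifts_monoid:
  "(0, 0) \<in> nonneg_shifts w"
  "g \<in> nonneg_shifts w \<Longrightarrow> h \<in> nonneg_shifts w \<Longrightarrow> (fst g + fst h, snd g + snd h) \<in> nonneg_shifts w"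
  by (simp_all add: nonneg_shifts_def ip_zero ip_add)

lemma ordered_iff_nonneg_shifts:
  "ordered w z \<longleftrightarrow> (\<forall>h\<in>nonneg_shifts w. z \<le> tau (fst h) (snd h) z)"
  by (auto simp: ordered_def nonneg_shifts_def)

lemma closed_birkhoff: "closed {x :: 'd::finite config. birkhoff x}"
  unfolding birkhoff_def le_fun_def tau_def
  by (intro closed_Collect_all closed_Collect_disj closed_Collect_le
      continuous_intros continuous_on_product_coordinates)

lemma birkhoff_translates_comparable:
  assumes "birkhoff x"
  shows "tau k l x \<le> tau k' l' x \<or> tau k' l' x \<le> tau k l x"
proof -
  have "tau k l x = tau k' l' (tau (k - k') (l - l') x)" by (simp add: tau_tau)
  moreover have "x \<le> tau (k - k') (l - l') x \<or> tau (k - k') (l - l') x \<le> x"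
    using assms unfolding birkhoff_def by blast
  ultimately show ?thesis using tau_mono by metis
qed

section \<open>Periodic configurations\<close>

definition dot_int :: "int^'d::finite \<Rightarrow> int^'d \<Rightarrow> int" where
  "dot_int P v = (\<Sum>m\<in>UNIV. P$m * v$m)"

definition periodic :: "int \<Rightarrow> int^'d::finite \<Rightarrow> 'd config \<Rightarrow> bool" where
  "periodic Q P x \<longleftrightarrow> (\<forall>i v. x (i + Q *s v) = x i + real_of_int (dot_int P v))"

definition rat_vec :: "int \<Rightarrow> int^'d::finite \<Rightarrow> real^'d" where
  "rat_vec Q P = (\<chi> m. real_of_int (P$m) / real_of_int Q)"

definition cell :: "int \<Rightarrow> (int^'d::finite) set" where
  "cell Q = {j. \<forall>m. 0 \<le> j$m \<and> j$m < Q}"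

definition vmod :: "int \<Rightarrow> int^'d::finite \<Rightarrow> int^'d" where
  "vmod Q i = (\<chi> m. i$m mod Q)"

lemma vmod_decomp: "i = vmod Q i + Q *s (\<chi> m. i$m div Q)"
  by (simp add: vec_eq_iff vmod_def)

lemma vmod_cell: "Q > 0 \<Longrightarrow> vmod Q i \<in> cell Q"
  by (simp add: vmod_def cell_def)

lemma cell_finite: "finite (cell Q)"
  unfolding cell_def using finite_int_box[of "\<lambda>_. 0" "\<lambda>_. Q - 1"]
  by (rule finite_subset[rotated]) auto

lemma vmod_add_mult: "vmod Q (i + Q *s v) = vmod Q i"
  by (simp add: vec_eq_iff vmod_def)

lemma vmod_cell_id: "j \<in> cell Q \<Longrightarrow> vmod Q j = j"
  by (simp add: vec_eq_iff vmod_def cell_def)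

lemma dot_int_add: "dot_int P (a + b) = dot_int P a + dot_int P b"
  by (simp add: dot_int_def algebra_simps sum.distrib)

lemma dot_int_smult: "dot_int P (Q *s v) = Q * dot_int P v"
  by (simp add: dot_int_def sum_distrib_left algebra_simps)

lemma ip_rat_vec: "Q > 0 \<Longrightarrow> ip (rat_vec Q P) k = real_of_int (dot_int P k) / real_of_int Q"
  by (simp add: ip_def rat_vec_def dot_int_def sum_divide_distrib)

lemma periodic_affine: "Q > 0 \<Longrightarrow> periodic Q P (ip (rat_vec Q P))"
  by (simp add: periodic_def ip_rat_vec dot_int_add dot_int_smult field_simps)

lemma periodic_tau: "periodic Q P x \<Longrightarrow> periodic Q P (tau k l x)"
  unfolding periodic_def tau_def by (metis (no_types, lifting) add.commute add.left_commute)

lemma periodic_min: "periodic Q P x \<Longrightarrow> periodic Q P z \<Longrightarrow> periodic Q P (\<lambda>i. min (x i) (z i))"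
  unfolding periodic_def by (simp add: min_add_distrib_left)

lemma periodic_max: "periodic Q P x \<Longrightarrow> periodic Q P z \<Longrightarrow> periodic Q P (\<lambda>i. max (x i) (z i))"
  unfolding periodic_def by (simp add: max_add_distrib_left)

lemma periodic_shift: "periodic Q P x \<Longrightarrow> periodic Q P (\<lambda>i. x i + c)"
  unfolding periodic_def by simp

lemma closed_periodic: "closed {x. periodic Q P x}"
  unfolding periodic_def
  by (intro closed_Collect_all closed_Collect_eq continuous_intros continuous_on_product_coordinates)

lemma periodic_bounded_deviation:
  assumes Q: "Q > 0" and p: "periodic Q P x"
  shows "\<exists>M. \<forall>i. \<bar>x i - ip (rat_vec Q P) i\<bar> \<le> M"
proof -
  define u where "u i = x i - ip (rat_vec Q P) i" for i
  have "u (i + Q *s v) = u i" for i v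
    using p periodic_affine[OF Q, of P] unfolding u_def periodic_def by simp
  hence "u i = u (vmod Q i)" for i by (metis vmod_decomp)
  moreover have "\<bar>u (vmod Q i)\<bar> \<le> Max ((\<lambda>i. \<bar>u i\<bar>) ` cell Q)" for i
    using vmod_cell[OF Q] cell_finite by (intro Max_ge) auto
  ultimately show ?thesis unfolding u_def by metis
qed


lemma rat_vec_floor_error:
  assumes Q: "Q > 0"
  shows "\<bar>ip (rat_vec Q (\<chi> m. \<lfloor>real_of_int Q * w$m\<rfloor>)) k - ip w k\<bar>
         \<le> real_of_int (norm1 k) / real_of_int Q"
proof -
  let ?e = "\<lambda>m. real_of_int \<lfloor>real_of_int Q * w$m\<rfloor> / real_of_int Q - w$m"
  have e: "\<bar>?e m\<bar> \<le> 1 / real_of_int Q" for m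
  proof -
    have "?e m = (real_of_int \<lfloor>real_of_int Q * w$m\<rfloor> - real_of_int Q * w$m) / real_of_int Q"
      using Q by (simp add: field_simps)
    moreover have "\<bar>real_of_int \<lfloor>real_of_int Q * w$m\<rfloor> - real_of_int Q * w$m\<bar> \<le> 1" by linarith
    ultimately show ?thesis using Q by (simp add: divide_right_mono)
  qed
  have "\<bar>ip (rat_vec Q (\<chi> m. \<lfloor>real_of_int Q * w$m\<rfloor>)) k - ip w k\<bar>
      = \<bar>\<Sum>m\<in>UNIV. ?e m * real_of_int (k$m)\<bar>"
    by (simp add: ip_def rat_vec_def sum_subtractf algebra_simps)
  also have "\<dots> \<le> (\<Sum>m\<in>UNIV. 1 / real_of_int Q * \<bar>real_of_int (k$m)\<bar>)"
  proof (rule order_trans[OF sum_abs sum_mono])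
    fix m
    show "\<bar>?e m * real_of_int (k$m)\<bar> \<le> 1 / real_of_int Q * \<bar>real_of_int (k$m)\<bar>"
      using mult_right_mono[OF e[of m], of "\<bar>real_of_int (k$m)\<bar>"] by (simp add: abs_mult)
  qed
  also have "\<dots> = real_of_int (norm1 k) / real_of_int Q"
    by (simp add: norm1_def sum_divide_distrib)
  finally show ?thesis .
qed

definition approx_den :: "nat \<Rightarrow> int" where
  "approx_den n = 2 * (int n + 1)"

definition approx_num :: "real^'d::finite \<Rightarrow> nat \<Rightarrow> int^'d" where
  "approx_num w n = (\<chi> m. \<lfloor>real_of_int (approx_den n) * w$m\<rfloor>)"

abbreviation approx_vec :: "real^'d::finite \<Rightarrow> nat \<Rightarrow> real^'d" where
  "approx_vec w n \<equiv> rat_vec (approx_den n) (approx_num w n)"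

lemma approx_den_pos: "approx_den n > 0"
  by (simp add: approx_den_def)

lemma approx_vec_error: "\<bar>ip (approx_vec w n) k - ip w k\<bar> \<le> real_of_int (norm1 k)"
proof -
  have "real_of_int (norm1 k) / real_of_int (approx_den n) \<le> real_of_int (norm1 k) / 1"
    using norm1_nonneg[of k] by (intro divide_left_mono) (auto simp: approx_den_def)
  thus ?thesis using rat_vec_floor_error[OF approx_den_pos[of n], of w k] by (simp add: approx_num_def)
qed

lemma approx_vec_tendsto: "(\<lambda>n. ip (approx_vec w n) k) \<longlonglongrightarrow> ip w k"
proof -
  have "(\<lambda>n. ip (approx_vec w n) k - ip w k) \<longlonglongrightarrow> 0"
  proof (rule Lim_null_comparison[of _ "\<lambda>n. real_of_int (norm1 k) / real n"])
    show "\<forall>\<^sub>F n in sequentially. norm (ip (approx_vec w n) k - ip w k) \<le> real_of_int (norm1 k) / real n"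
      using eventually_gt_at_top[of 0]
    proof eventually_elim
      fix n :: nat assume n: "0 < n"
      have "real_of_int (norm1 k) / real_of_int (approx_den n) \<le> real_of_int (norm1 k) / real n"
        using n norm1_nonneg[of k] by (intro divide_left_mono) (auto simp: approx_den_def)
      thus "norm (ip (approx_vec w n) k - ip w k) \<le> real_of_int (norm1 k) / real n"
        using rat_vec_floor_error[OF approx_den_pos[of n], of w k] by (simp add: approx_num_def)
    qed
  qed (rule lim_const_over_n)
  thus ?thesis by (simp add: LIM_zero_iff)
qed

lemma window_coordinate:
  fixes t Q :: int and s :: real
  assumes s: "0 < s" and Qs: "2 * s < real_of_int Q"
    and lo: "- s \<le> real_of_int t" and hi: "real_of_int t \<le> real_of_int (Q - 1) + s"
    and out: "t < 0 \<or> Q \<le> t"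
  shows "\<not> (s < real_of_int t \<and> real_of_int t + s < real_of_int Q)"
    and "\<not> (s < real_of_int (t mod Q) \<and> real_of_int (t mod Q) + s < real_of_int Q)"
proof -
  show "\<not> (s < real_of_int t \<and> real_of_int t + s < real_of_int Q)"
    using out s by (auto simp flip: of_int_le_iff)
  show "\<not> (s < real_of_int (t mod Q) \<and> real_of_int (t mod Q) + s < real_of_int Q)"
  proof (cases "t < 0")
    case True
    have "real_of_int (- Q) < real_of_int t" using lo Qs s by simp
    hence "(t + Q) mod Q = t + Q" using True by (intro mod_pos_pos_trivial) auto
    hence "t mod Q = t + Q" by simp
    thus ?thesis using lo by simp
  next
    case False
    hence "Q \<le> t" using out by simp
    moreover have "real_of_int t < real_of_int (2 * Q)" using hi Qs s by simp
    hence "t < 2 * Q" by (simp only: of_int_less_iff)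
    ultimately have "(t - Q) mod Q = t - Q" by (intro mod_pos_pos_trivial) auto
    hence "t mod Q = t - Q" by simp
    thus ?thesis using hi by simp
  qed
qed

section \<open>Local potentials\<close>

text \<open>The hypotheses (A)-(D) of the theorem that the construction uses.\<close>
locale local_potentials =
  fixes S :: "int ^ 'd::finite \<Rightarrow> (int ^ 'd \<Rightarrow> real) \<Rightarrow> real"
    and r :: real
  assumes A_r: "r > 0"
    and A_local: "\<And>j x y. (\<forall>k\<in>lball j r. x k = y k) \<Longrightarrow> S j x = S j y"
    and A_C2: "\<And>j. C2 (S j)"
    and B: "\<And>j k l x. S j (tau k l x) = S (j + k) x"
    and C_bdd: "\<And>j. \<exists>m. \<forall>x. S j x \<ge> m"
    and C_coerc: "\<And>j k. norm1 (k - j) = 1 \<Longrightarrow>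
        filterlim (S j) at_top (filtercomap (\<lambda>x. \<bar>x k - x j\<bar>) at_top)"
    and D1: "\<And>i k j x. i \<noteq> k \<Longrightarrow> pd i (pd k (S j)) x \<le> 0"
begin

text \<open>Each local potential is submodular; by locality this reduces to the
  finitely supported case.\<close>
lemma submodular: "S j (\<lambda>i. min (x i) (z i)) + S j (\<lambda>i. max (x i) (z i)) \<le> S j x + S j z"
proof -
  define z' where "z' = (\<lambda>i. if i \<in> lball j r then z i else x i)"
  have "S j (\<lambda>i. min (x i) (z' i)) + S j (\<lambda>i. max (x i) (z' i)) \<le> S j x + S j z'"
    by (rule submodular_finite_difference[OF A_C2 D1 lball_finite]) (auto simp: z'_def)
  moreover have "S j z' = S j z"
    and "S j (\<lambda>i. min (x i) (z' i)) = S j (\<lambda>i. min (x i) (z i))"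
    and "S j (\<lambda>i. max (x i) (z' i)) = S j (\<lambda>i. max (x i) (z i))"
    by (intro A_local; auto simp: z'_def)+
  ultimately show ?thesis by simp
qed

lemma S_shift: "S j (\<lambda>i. x i + real_of_int l) = S j x"
  using B[of j 0 l x] by (simp add: tau_def)

lemma S_cont: "continuous_on UNIV (S j)" using A_C2 unfolding C2_def by blast

text \<open>By translation invariance one lower bound serves all sites.\<close>
lemma S_uniform_lower_bound: "\<exists>m0. \<forall>j x. m0 \<le> S j x"
proof -
  obtain m0 where "\<forall>x. S 0 x \<ge> m0" using C_bdd by blast
  thus ?thesis using B[of 0 _ 0] by (metis add_0)
qed

lemma coercive_bond_bound:
  assumes u: "norm1 u = 1"
  shows "\<exists>R. \<forall>x. S 0 x \<le> c \<longrightarrow> \<bar>x u - x 0\<bar> \<le> R"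
proof -
  have "filterlim (S 0) at_top (filtercomap (\<lambda>x. \<bar>x u - x 0\<bar>) at_top)"
    using u by (intro C_coerc) simp
  hence "eventually (\<lambda>x. c + 1 \<le> S 0 x) (filtercomap (\<lambda>x. \<bar>x u - x 0\<bar>) at_top)"
    by (simp add: filterlim_at_top)
  then obtain P where P: "eventually P at_top" "\<And>x. P \<bar>x u - x 0\<bar> \<Longrightarrow> c + 1 \<le> S 0 x"
    by (auto simp: eventually_filtercomap)
  then obtain N where "\<And>n. n \<ge> N \<Longrightarrow> P n" by (auto simp: eventually_at_top_linorder)
  hence "S 0 x \<le> c \<Longrightarrow> \<bar>x u - x 0\<bar> \<le> N" for x using P(2) by (meson linorder_le_cases not_le less_add_one order_trans)
  thus ?thesis by blast
qed

text \<open>Uniform version over all bonds, using the finitely many bond directions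
  and translation invariance.\<close>
lemma coercive_neighbour_bound:
  "\<exists>R. \<forall>j k x. norm1 (k - j) = 1 \<longrightarrow> S j x \<le> c \<longrightarrow> \<bar>x k - x j\<bar> \<le> R"
proof -
  have "\<forall>u. \<exists>R. norm1 u = 1 \<longrightarrow> (\<forall>x. S 0 x \<le> c \<longrightarrow> \<bar>x u - x 0\<bar> \<le> R)"
    using coercive_bond_bound by blast
  then obtain R where R: "\<And>u x. norm1 u = 1 \<Longrightarrow> S 0 x \<le> c \<Longrightarrow> \<bar>x u - x 0\<bar> \<le> R u"
    by (metis choice)
  define Rmax where "Rmax = Max (R ` {u. norm1 u = 1})"
  have "\<bar>x k - x j\<bar> \<le> Rmax" if "norm1 (k - j) = 1" "S j x \<le> c" for j k x
  proof -
    have "S 0 (tau j 0 x) \<le> c" using that B[of 0 j 0 x] by simp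
    hence "\<bar>tau j 0 x (k - j) - tau j 0 x 0\<bar> \<le> R (k - j)" using R that(1) by blast
    moreover have "R (k - j) \<le> Rmax"
      unfolding Rmax_def using that(1) finite_unit_sphere by (intro Max_ge) auto
    ultimately show ?thesis by (simp add: tau_def)
  qed
  thus ?thesis by blast
qed


definition cell_action :: "int \<Rightarrow> (int^'d \<Rightarrow> real) \<Rightarrow> real" where
  "cell_action Q x = (\<Sum>j\<in>cell Q. S j x)"

definition periodic_minimizer :: "int \<Rightarrow> int^'d \<Rightarrow> (int^'d \<Rightarrow> real) \<Rightarrow> bool" where
  "periodic_minimizer Q P x \<longleftrightarrow>
     periodic Q P x \<and> (\<forall>z. periodic Q P z \<longrightarrow> cell_action Q x \<le> cell_action Q z)"

lemma S_periodic_site: "periodic Q P x \<Longrightarrow> S (j + Q *s v) x = S j x"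
proof -
  assume "periodic Q P x"
  hence "tau (Q *s v) (- dot_int P v) x = x" by (simp add: tau_def periodic_def fun_eq_iff)
  thus ?thesis using B[of j "Q *s v" "- dot_int P v" x] by simp
qed

lemma S_vmod: "periodic Q P x \<Longrightarrow> S j x = S (vmod Q j) x"
  by (metis S_periodic_site vmod_decomp)

lemma cell_action_translate:
  assumes Q: "Q > 0" and p: "periodic Q P x"
  shows "(\<Sum>j\<in>cell Q. S (j + c) x) = cell_action Q x"
  unfolding cell_action_def
proof (rule sum.reindex_bij_witness[of _ "\<lambda>b. vmod Q (b - c)" "\<lambda>a. vmod Q (a + c)"])
  fix a :: "int^'d" assume a: "a \<in> cell Q"
  show "vmod Q (vmod Q (a + c) - c) = a" using a
    by (simp add: vec_eq_iff vmod_def cell_def mod_diff_left_eq)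
  show "vmod Q (a + c) \<in> cell Q" using Q by (rule vmod_cell)
  show "S (vmod Q (a + c)) x = S (a + c) x" using S_vmod[OF p] by simp
next
  fix b :: "int^'d" assume b: "b \<in> cell Q"
  show "vmod Q (vmod Q (b - c) + c) = b" using b
    by (simp add: vec_eq_iff vmod_def cell_def mod_add_left_eq)
  show "vmod Q (b - c) \<in> cell Q" using Q by (rule vmod_cell)
qed

lemma cell_action_tau: "Q > 0 \<Longrightarrow> periodic Q P x \<Longrightarrow> cell_action Q (tau k l x) = cell_action Q x"
  using cell_action_translate[of Q P x k] by (simp add: B cell_action_def)

lemma cell_action_shift: "cell_action Q (\<lambda>i. x i + real_of_int l) = cell_action Q x"
  unfolding cell_action_def by (simp add: S_shift)

lemma cell_action_cont: "continuous_on UNIV (cell_action Q)"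
  unfolding cell_action_def by (intro continuous_on_sum S_cont)

lemma periodic_minimizer_tau:
  "Q > 0 \<Longrightarrow> periodic_minimizer Q P x \<Longrightarrow> periodic_minimizer Q P (tau k l x)"
  using periodic_tau cell_action_tau unfolding periodic_minimizer_def by metis

lemma periodic_minimizer_shift:
  "periodic_minimizer Q P x \<Longrightarrow> periodic_minimizer Q P (\<lambda>i. x i + real_of_int l)"
  using periodic_shift cell_action_shift unfolding periodic_minimizer_def by metis

text \<open>Submodularity makes the minimum of two periodic minimizers again one.\<close>
lemma periodic_minimizer_min:
  assumes a: "periodic_minimizer Q P x" "periodic_minimizer Q P z"
  shows "periodic_minimizer Q P (\<lambda>i. min (x i) (z i))"
proof -
  have px: "periodic Q P x" "periodic Q P z" using a by (auto simp: periodic_minimizer_def)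
  have "cell_action Q z \<le> cell_action Q (\<lambda>i. max (x i) (z i))"
    using a periodic_max[OF px] by (auto simp: periodic_minimizer_def)
  moreover have "cell_action Q (\<lambda>i. min (x i) (z i)) + cell_action Q (\<lambda>i. max (x i) (z i))
      \<le> cell_action Q x + cell_action Q z"
    unfolding cell_action_def sum.distrib[symmetric] by (intro sum_mono submodular)
  moreover have "cell_action Q x \<le> cell_action Q (\<lambda>i. min (x i) (z i))"
    using a periodic_min[OF px] by (auto simp: periodic_minimizer_def)
  ultimately show ?thesis using a periodic_min[OF px] by (auto simp: periodic_minimizer_def)
qed

lemma periodic_minimizer_lim:
  assumes g: "\<forall>N. periodic_minimizer Q P (g N)" and lim: "\<forall>i. (\<lambda>N. g N i) \<longlonglongrightarrow> z i"
  shows "periodic_minimizer Q P z"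
proof -
  have gz: "g \<longlonglongrightarrow> z" using lim tendsto_fun_iff by blast
  have "periodic Q P z"
    using closed_sequentially[OF closed_periodic[of Q P], of g z] g gz
    by (auto simp: periodic_minimizer_def)
  moreover have "(\<lambda>N. cell_action Q (g N)) \<longlonglongrightarrow> cell_action Q z"
    by (intro continuous_on_tendsto_compose[OF cell_action_cont gz]) auto
  hence "cell_action Q z \<le> cell_action Q w" if "periodic Q P w" for w
    using g that by (intro LIMSEQ_le_const2[of "\<lambda>N. cell_action Q (g N)"]) (auto simp: periodic_minimizer_def)
  ultimately show ?thesis by (simp add: periodic_minimizer_def)
qed

lemma site_le_cell_action:
  assumes Q: "Q > 0" and p: "periodic Q P x" and m0: "\<And>j x. m0 \<le> S j x"
  shows "S j x \<le> cell_action Q x - real (card (cell Q :: (int^'d) set)) * m0 + m0"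
proof -
  have "S (vmod Q j) x - m0 \<le> (\<Sum>i\<in>cell Q. S i x - m0)"
    using vmod_cell[OF Q] cell_finite m0 by (intro member_le_sum) auto
  thus ?thesis using S_vmod[OF p, of j] by (simp add: sum_subtractf cell_action_def)
qed

text \<open>Normalised periodic configurations of bounded cell action form a compact
  set: bounded action bounds all bond increments by coercivity.\<close>
lemma periodic_sublevel_compact:
  assumes Q: "Q > 0"
  shows "compact {x. periodic Q P x \<and> 0 \<le> x 0 \<and> x 0 \<le> 1 \<and> cell_action Q x \<le> c}"
    (is "compact ?K")
proof -
  obtain m0 where m0: "\<And>j x. m0 \<le> S j x" using S_uniform_lower_bound by blast
  obtain R where R: "\<And>j k x. norm1 (k - j) = 1 \<Longrightarrow>
      S j x \<le> c - real (card (cell Q :: (int^'d) set)) * m0 + m0 \<Longrightarrow> \<bar>x k - x j\<bar> \<le> R"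
    using coercive_neighbour_bound by blast
  define b where "b (i::int^'d) = 1 + \<bar>R\<bar> * real_of_int (norm1 i)" for i
  have "?K \<subseteq> PiE UNIV (\<lambda>i. {- b i .. b i})"
  proof
    fix x assume x: "x \<in> ?K"
    have "S j x \<le> c - real (card (cell Q :: (int^'d) set)) * m0 + m0" for j
      using site_le_cell_action[OF Q _ m0, of P x j] x by simp
    hence "\<bar>x k - x j\<bar> \<le> R" if "norm1 (k - j) = 1" for j k
      using R[OF that] by blast
    hence incr: "\<bar>x i - x 0\<bar> \<le> R * real_of_int (norm1 (i - 0))" for i
      by (rule increment_bound)
    have "\<bar>x i\<bar> \<le> b i" for i
    proof -
      have "R * real_of_int (norm1 i) \<le> \<bar>R\<bar> * real_of_int (norm1 i)"
        using norm1_nonneg[of i] by (intro mult_right_mono) auto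
      moreover have "0 \<le> x 0" "x 0 \<le> 1" using x by auto
      ultimately show ?thesis using incr[of i] unfolding b_def by (simp add: abs_le_iff)
    qed
    hence "- b i \<le> x i \<and> x i \<le> b i" for i by (metis abs_le_iff minus_le_iff)
    thus "x \<in> PiE UNIV (\<lambda>i. {- b i .. b i})" by auto
  qed
  moreover have "closed ?K"
    by (intro closed_Collect_conj closed_periodic[unfolded mem_Collect_eq] closed_Collect_le
        continuous_intros continuous_on_product_coordinates cell_action_cont)
  ultimately have "compact (PiE UNIV (\<lambda>i. {- b i .. b i}) \<inter> ?K)"
    by (intro compact_Int_closed compact_PiE_Icc)
  moreover have "PiE UNIV (\<lambda>i. {- b i .. b i}) \<inter> ?K = ?K" using \<open>?K \<subseteq> _\<close> by blast
  ultimately show ?thesis by simp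
qed

text \<open>Existence of periodic minimizers: minimise the cell action over the
  compact set of normalised competitors that are no worse than the affine
  configuration; normalisation by integer shifts does not change the action.\<close>
lemma periodic_minimizer_exists:
  assumes Q: "Q > 0"
  shows "\<exists>x. periodic_minimizer Q P x"
proof -
  define a where "a = ip (rat_vec Q P)"
  define K where "K = {x. periodic Q P x \<and> 0 \<le> x 0 \<and> x 0 \<le> 1 \<and> cell_action Q x \<le> cell_action Q a}"
  have aK: "a \<in> K" using periodic_affine[OF Q] by (simp add: K_def a_def ip_zero)
  obtain x where xK: "x \<in> K" and xm: "\<And>y. y \<in> K \<Longrightarrow> cell_action Q x \<le> cell_action Q y"
    using continuous_attains_inf[OF periodic_sublevel_compact[OF Q] _
        continuous_on_subset[OF cell_action_cont]] aK unfolding K_def by blast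
  have "cell_action Q x \<le> cell_action Q z" if pz: "periodic Q P z" for z
  proof -
    define z' where "z' = (\<lambda>i. z i + real_of_int (- \<lfloor>z 0\<rfloor>))"
    have "periodic Q P z'" unfolding z'_def using pz by (rule periodic_shift)
    moreover have "0 \<le> z' 0" "z' 0 \<le> 1" unfolding z'_def by linarith+
    moreover have "cell_action Q z' = cell_action Q z" unfolding z'_def by (rule cell_action_shift)
    ultimately show ?thesis using xm[of z'] xm[OF aK] unfolding K_def by fastforce
  qed
  thus ?thesis using xK by (auto simp: periodic_minimizer_def K_def)
qed

text \<open>Among the periodic minimizers there is an ordered one (for the rotation
  vector P/Q), normalised at the origin: apply the infimum construction to the
  translates of any periodic minimizer.\<close>
lemma ordered_periodic_minimizer_exists:
  assumes Q: "Q > 0"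
  shows "\<exists>x. periodic_minimizer Q P x \<and> ordered (rat_vec Q P) x \<and> 0 \<le> x 0 \<and> x 0 \<le> 1"
proof -
  define w where "w = rat_vec Q P"
  obtain x0 where x0: "periodic_minimizer Q P x0" using periodic_minimizer_exists[OF Q] by blast
  obtain M where M: "\<And>i. \<bar>x0 i - ip w i\<bar> \<le> M"
    using periodic_bounded_deviation[OF Q, of P x0] x0 unfolding w_def periodic_minimizer_def by blast
  have "\<exists>z. periodic_minimizer Q P z \<and> (\<forall>h\<in>nonneg_shifts w. z \<le> tau (fst h) (snd h) z)"
  proof (rule ordered_infimum[where G = "periodic_minimizer Q P" and C = "2 * M"])
    show "x0 i - 2 * M \<le> tau (fst h) (snd h) x0 i" if "h \<in> nonneg_shifts w" for h i
      using that M[of i] M[of "i + fst h"]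
      by (simp add: nonneg_shifts_def tau_def abs_le_iff ip_add)
  next
    show "periodic_minimizer Q P (tau (fst h) (snd h) x0)" for h
      using x0 by (rule periodic_minimizer_tau[OF Q])
  qed (fact nonneg_shifts_monoid periodic_minimizer_min periodic_minimizer_lim)+
  then obtain z where z: "periodic_minimizer Q P z" "ordered w z"
    using ordered_iff_nonneg_shifts by blast
  define z' where "z' = (\<lambda>i. z i + real_of_int (- \<lfloor>z 0\<rfloor>))"
  have "periodic_minimizer Q P z'" unfolding z'_def by (rule periodic_minimizer_shift[OF z(1)])
  moreover have "ordered w z'" unfolding z'_def by (rule ordered_shift[OF z(2)])
  moreover have "0 \<le> z' 0" "z' 0 \<le> 1" unfolding z'_def by linarith+
  ultimately show ?thesis unfolding w_def by blast
qed


text \<open>Sites whose potential can feel a perturbation supported in A.\<close>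
definition nbhd :: "(int^'d) set \<Rightarrow> (int^'d) set" where
  "nbhd A = (\<Union>a\<in>A. lball a r)"

definition action_change :: "(int^'d \<Rightarrow> real) \<Rightarrow> (int^'d) set \<Rightarrow> (int^'d \<Rightarrow> real) \<Rightarrow> real" where
  "action_change x A y = (\<Sum>j\<in>nbhd A. S j (\<lambda>i. x i + y i) - S j x)"

definition locally_minimal :: "(int^'d \<Rightarrow> real) \<Rightarrow> bool" where
  "locally_minimal x \<longleftrightarrow>
     (\<forall>A y. finite A \<longrightarrow> (\<forall>i. i \<notin> A \<longrightarrow> y i = 0) \<longrightarrow> 0 \<le> action_change x A y)"

lemma nbhd_iff: "j \<in> nbhd A \<longleftrightarrow> (\<exists>a\<in>A. real_of_int (norm1 (a - j)) \<le> r)"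
  unfolding nbhd_def lball_def by (auto simp: norm1_minus_commute)

lemma S_perturb_outside_nbhd:
  assumes "j \<notin> nbhd A" "\<forall>i. i \<notin> A \<longrightarrow> y i = 0"
  shows "S j (\<lambda>i. x i + y i) = S j x"
proof (rule A_local, intro ballI)
  fix k assume "k \<in> lball j r"
  hence "k \<notin> A" using assms(1) unfolding nbhd_iff lball_def by (auto simp: norm1_minus_commute)
  thus "x k + y k = x k" using assms(2) by simp
qed

lemma action_change_superset:
  assumes "finite C" "nbhd A \<subseteq> C" "\<forall>i. i \<notin> A \<longrightarrow> y i = 0"
  shows "(\<Sum>j\<in>C. S j (\<lambda>i. x i + y i) - S j x) = action_change x A y"
  unfolding action_change_def using S_perturb_outside_nbhd[OF _ assms(3)]
  by (intro sum.mono_neutral_right[OF assms(1,2)]) auto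

text \<open>Local minimality is the defining property of a global minimizer: the
  r-neighbourhood of the interior of B lies in B.\<close>
lemma global_minimizer_if_locally_minimal:
  assumes g: "locally_minimal x"
  shows "global_minimizer S r x"
  unfolding global_minimizer_def
proof (intro allI impI)
  fix B :: "(int^'d) set" and y :: "int^'d \<Rightarrow> real"
  assume B: "finite B" and y: "\<forall>i. i \<notin> interior_r B r \<longrightarrow> y i = 0"
  have "finite (interior_r B r)" using B by (rule finite_subset[rotated]) (auto simp: interior_r_def)
  hence "0 \<le> action_change x (interior_r B r) y" using g y unfolding locally_minimal_def by blast
  moreover have "nbhd (interior_r B r) \<subseteq> B" by (auto simp: nbhd_def interior_r_def)
  ultimately have "0 \<le> (\<Sum>j\<in>B. S j (\<lambda>i. x i + y i) - S j x)"
    using action_change_superset[OF B _ y] by simp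
  thus "WB S B x \<le> WB S B (\<lambda>i. x i + y i)" by (simp add: WB_def sum_subtractf)
qed

lemma action_change_tau:
  "action_change (tau k l x) A y = action_change x ((\<lambda>a. a + k) ` A) (\<lambda>i. y (i - k))"
proof -
  have e1: "(\<lambda>i. tau k l x i + y i) = tau k l (\<lambda>i. x i + y (i - k))"
    by (simp add: tau_def fun_eq_iff)
  have e2: "nbhd ((\<lambda>a. a + k) ` A) = (\<lambda>j. j + k) ` nbhd A"
  proof (intro equalityI subsetI)
    fix j assume "j \<in> nbhd ((\<lambda>a. a + k) ` A)"
    then obtain a where "a \<in> A" "real_of_int (norm1 (a - (j - k))) \<le> r"
      by (auto simp: nbhd_iff algebra_simps)
    hence "j - k \<in> nbhd A" unfolding nbhd_iff by blast
    thus "j \<in> (\<lambda>j. j + k) ` nbhd A" by (intro image_eqI[of _ _ "j - k"]) auto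
  next
    fix j assume "j \<in> (\<lambda>j. j + k) ` nbhd A"
    then obtain j0 a where "j = j0 + k" "a \<in> A" "real_of_int (norm1 (a - j0)) \<le> r"
      by (auto simp: nbhd_iff)
    thus "j \<in> nbhd ((\<lambda>a. a + k) ` A)" unfolding nbhd_iff by force
  qed
  have "action_change (tau k l x) A y = (\<Sum>j\<in>nbhd A. S (j + k) (\<lambda>i. x i + y (i - k)) - S (j + k) x)"
    unfolding action_change_def e1 B ..
  also have "\<dots> = (\<Sum>j\<in>(\<lambda>j. j + k) ` nbhd A. S j (\<lambda>i. x i + y (i - k)) - S j x)"
    by (rule sum.reindex[unfolded comp_def, symmetric]) (simp add: inj_on_def)
  finally show ?thesis unfolding action_change_def e2 .
qed

lemma locally_minimal_tau:
  assumes g: "locally_minimal x"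
  shows "locally_minimal (tau k l x)"
  unfolding locally_minimal_def
proof (intro allI impI)
  fix A :: "(int^'d) set" and y :: "int^'d \<Rightarrow> real"
  assume A: "finite A" and y: "\<forall>i. i \<notin> A \<longrightarrow> y i = 0"
  have yk: "\<forall>i. i \<notin> (\<lambda>a. a + k) ` A \<longrightarrow> y (i - k) = 0"
  proof (intro allI impI)
    fix i assume i: "i \<notin> (\<lambda>a. a + k) ` A"
    have "i - k \<notin> A"
    proof
      assume "i - k \<in> A"
      hence "(i - k) + k \<in> (\<lambda>a. a + k) ` A" by (rule imageI)
      thus False using i by simp
    qed
    thus "y (i - k) = 0" using y by blast
  qed
  have "finite ((\<lambda>a. a + k) ` A)" using A by (rule finite_imageI)
  hence "0 \<le> action_change x ((\<lambda>a. a + k) ` A) (\<lambda>i. y (i - k))"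
    using g yk unfolding locally_minimal_def by meson
  thus "0 \<le> action_change (tau k l x) A y" by (simp only: action_change_tau)
qed

lemma action_change_tendsto:
  assumes "\<forall>i. (\<lambda>n. z n i) \<longlonglongrightarrow> x i"
  shows "(\<lambda>n. action_change (z n) A y) \<longlonglongrightarrow> action_change x A y"
proof -
  have z: "z \<longlonglongrightarrow> x" using assms tendsto_fun_iff by blast
  have zy: "(\<lambda>n. \<lambda>i. z n i + y i) \<longlonglongrightarrow> (\<lambda>i. x i + y i)"
    using assms by (subst tendsto_fun_iff) (auto intro: tendsto_add)
  show ?thesis unfolding action_change_def
    by (intro tendsto_sum tendsto_diff continuous_on_tendsto_compose[OF S_cont zy]
        continuous_on_tendsto_compose[OF S_cont z]) auto
qed

lemma locally_minimal_lim:
  assumes "\<forall>i. (\<lambda>n. z n i) \<longlonglongrightarrow> x i"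
    and "\<And>A y. finite A \<Longrightarrow> (\<forall>i. i \<notin> A \<longrightarrow> y i = 0) \<Longrightarrow>
           eventually (\<lambda>n. 0 \<le> action_change (z n) A y) sequentially"
  shows "locally_minimal x"
  unfolding locally_minimal_def
  using tendsto_lowerbound[OF action_change_tendsto[OF assms(1)] assms(2) trivial_limit_sequentially]
  by blast


definition deep_in :: "int \<Rightarrow> int^'d \<Rightarrow> (int^'d) set \<Rightarrow> bool" where
  "deep_in Q c A \<longleftrightarrow> (\<forall>a\<in>A. \<forall>m. r < real_of_int ((a - c)$m) \<and>
                                    real_of_int ((a - c)$m) + r < real_of_int Q)"

lemma nbhd_deep_in_window:
  assumes deep: "deep_in Q c A" and j: "j \<in> nbhd A"
  shows "j - c \<in> cell Q"
proof -
  obtain a where a: "a \<in> A" "real_of_int (norm1 (a - j)) \<le> r" using j by (auto simp: nbhd_iff)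
  have "0 \<le> (j - c)$m \<and> (j - c)$m < Q" for m
  proof -
    have "\<bar>real_of_int ((a - j)$m)\<bar> \<le> r" using a(2) by (rule norm1_bound_comp)
    moreover have "r < real_of_int ((a - c)$m)" "real_of_int ((a - c)$m) + r < real_of_int Q"
      using deep a(1) by (auto simp: deep_in_def)
    ultimately have "0 < real_of_int ((j - c)$m)" "real_of_int ((j - c)$m) < real_of_int Q"
      by (auto simp: abs_le_iff)
    thus ?thesis by simp
  qed
  thus ?thesis by (simp add: cell_def)
qed

lemma periodic_extension_agrees:
  assumes Q: "2 * r < real_of_int Q" and y: "\<forall>i. i \<notin> A \<longrightarrow> y i = 0"
    and deep: "deep_in Q c A" and j: "j - c \<in> cell Q" and k: "k \<in> lball j r"
  shows "y (c + vmod Q (k - c)) = y k"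
proof (cases "k - c \<in> cell Q")
  case True
  thus ?thesis by (simp add: vmod_cell_id)
next
  case False
  then obtain m where "\<not> (0 \<le> (k - c)$m \<and> (k - c)$m < Q)" by (auto simp: cell_def)
  hence out: "(k - c)$m < 0 \<or> Q \<le> (k - c)$m" by linarith
  have "\<bar>real_of_int ((k - j)$m)\<bar> \<le> r" using k by (intro norm1_bound_comp) (simp add: lball_def)
  moreover have "0 \<le> (j - c)$m" "(j - c)$m \<le> Q - 1" using j by (auto simp: cell_def)
  hence "0 \<le> real_of_int ((j - c)$m)" "real_of_int ((j - c)$m) \<le> real_of_int (Q - 1)"
    by (simp_all only: of_int_le_iff)
  ultimately have lo: "- r \<le> real_of_int ((k - c)$m)"
    and hi: "real_of_int ((k - c)$m) \<le> real_of_int (Q - 1) + r"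
    by (auto simp: abs_le_iff)
  note wc = window_coordinate[OF A_r Q lo hi out]
  have "k \<notin> A" using wc(1) deep by (auto simp: deep_in_def)
  moreover have "c + vmod Q (k - c) \<notin> A" using wc(2) deep by (auto simp: deep_in_def vmod_def)
  ultimately show ?thesis using y by simp
qed

text \<open>Periodic minimizers are local minimizers for perturbations supported
  deep inside a period window: extend the perturbation periodically and
  compare cell actions on the window.\<close>
lemma periodic_minimizer_window:
  assumes Q: "Q > 0" "2 * r < real_of_int Q" and pm: "periodic_minimizer Q P x"
    and y: "\<forall>i. i \<notin> A \<longrightarrow> y i = 0" and deep: "deep_in Q c A"
  shows "0 \<le> action_change x A y"
proof -
  define yp where "yp i = y (c + vmod Q (i - c))" for i
  define C where "C = (\<lambda>j. j + c) ` cell Q"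
  have p: "periodic Q P x" using pm by (simp add: periodic_minimizer_def)
  have "yp (i + Q *s v) = yp i" for i v
    using vmod_add_mult[of Q "i - c" v] by (simp add: yp_def algebra_simps)
  hence p2: "periodic Q P (\<lambda>i. x i + yp i)" using p unfolding periodic_def by simp
  have "cell_action Q x \<le> cell_action Q (\<lambda>i. x i + yp i)" using pm p2 by (simp add: periodic_minimizer_def)
  hence "0 \<le> (\<Sum>j\<in>cell Q. S (j + c) (\<lambda>i. x i + yp i) - S (j + c) x)"
    using cell_action_translate[OF Q(1) p, of c] cell_action_translate[OF Q(1) p2, of c]
    by (simp add: sum_subtractf)
  also have "\<dots> = (\<Sum>j\<in>C. S j (\<lambda>i. x i + yp i) - S j x)"
    unfolding C_def by (rule sum.reindex[unfolded comp_def, symmetric]) (simp add: inj_on_def)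
  also have "\<dots> = (\<Sum>j\<in>C. S j (\<lambda>i. x i + y i) - S j x)"
  proof (rule sum.cong[OF refl])
    fix j assume "j \<in> C"
    hence "j - c \<in> cell Q" by (auto simp: C_def)
    hence "S j (\<lambda>i. x i + yp i) = S j (\<lambda>i. x i + y i)"
      unfolding yp_def using periodic_extension_agrees[OF Q(2) y deep \<open>j - c \<in> cell Q\<close>]
      by (intro A_local) simp
    thus "S j (\<lambda>i. x i + yp i) - S j x = S j (\<lambda>i. x i + y i) - S j x" by simp
  qed
  also have "\<dots> = action_change x A y"
  proof (rule action_change_superset[OF _ _ y])
    show "finite C" unfolding C_def using cell_finite by (rule finite_imageI)
    show "nbhd A \<subseteq> C"
    proof
      fix j assume "j \<in> nbhd A"
      hence "j - c \<in> cell Q" by (rule nbhd_deep_in_window[OF deep])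
      moreover have "j = (j - c) + c" by simp
      ultimately show "j \<in> C" unfolding C_def by blast
    qed
  qed
  finally show ?thesis .
qed


lemma eventually_deep_in_centred_window:
  assumes fA: "finite A"
  shows "\<forall>\<^sub>F n in sequentially.
           2 * r < real_of_int (approx_den n) \<and> deep_in (approx_den n) (\<chi> m. - (int n + 1)) A"
proof -
  define M where "M = real_of_int (Max (insert 0 (norm1 ` A)))"
  have M0: "0 \<le> M" unfolding M_def using fA by simp
  have aM: "\<bar>real_of_int (a$m)\<bar> \<le> M" if "a \<in> A" for a m
  proof -
    have "norm1 a \<le> Max (insert 0 (norm1 ` A))" using fA that by (intro Max_ge) auto
    thus ?thesis using comp_le_norm1[of a m] unfolding M_def by linarith
  qed
  obtain N :: nat where N: "M + r < real N" using reals_Archimedean2 by blast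
  show ?thesis
  proof (rule eventually_sequentiallyI[of N])
    fix n assume "N \<le> n"
    hence big: "M + r < real n + 1" using N by linarith
    have "deep_in (approx_den n) (\<chi> m. - (int n + 1)) A"
      unfolding deep_in_def
    proof (intro ballI allI)
      fix a m assume "a \<in> A"
      hence "\<bar>real_of_int (a$m)\<bar> \<le> M" by (rule aM)
      thus "r < real_of_int ((a - (\<chi> m. - (int n + 1)))$m) \<and>
          real_of_int ((a - (\<chi> m. - (int n + 1)))$m) + r < real_of_int (approx_den n)"
        using big by (simp add: approx_den_def abs_le_iff)
    qed
    moreover have "2 * r < real_of_int (approx_den n)" using big M0 by (simp add: approx_den_def)
    ultimately show "2 * r < real_of_int (approx_den n) \<and> deep_in (approx_den n) (\<chi> m. - (int n + 1)) A"
      by blast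
  qed
qed

lemma ordered_normalised_bound:
  assumes o: "ordered w' x" and x0: "0 \<le> x 0" "x 0 \<le> 1"
    and w': "\<bar>ip w' i - ip w i\<bar> \<le> real_of_int (norm1 i)"
  shows "\<bar>x i\<bar> \<le> 2 + \<bar>ip w i\<bar> + real_of_int (norm1 i)"
  using ordered_increment[OF o, of 0 i] x0 w' by (simp add: abs_le_iff; linarith)

lemma birkhoff_local_minimizer_exists:
  "\<exists>x. locally_minimal x \<and> birkhoff x \<and> (\<forall>i k. \<bar>x (i + k) - x i - ip w k\<bar> \<le> 1)"
proof -
  have "\<forall>n. \<exists>x. periodic_minimizer (approx_den n) (approx_num w n) x \<and> ordered (approx_vec w n) x
        \<and> 0 \<le> x 0 \<and> x 0 \<le> 1"
    using ordered_periodic_minimizer_exists[OF approx_den_pos] by blast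
  then obtain xs where xs: "\<And>n. periodic_minimizer (approx_den n) (approx_num w n) (xs n)"
    "\<And>n. ordered (approx_vec w n) (xs n)" "\<And>n. 0 \<le> xs n 0" "\<And>n. xs n 0 \<le> 1"
    by metis
  define b where "b i = 2 + \<bar>ip w i\<bar> + real_of_int (norm1 i)" for i
  have "\<bar>xs n i\<bar> \<le> b i" for n i
    unfolding b_def using xs(2-4) approx_vec_error by (rule ordered_normalised_bound)
  hence "- b i \<le> xs n i \<and> xs n i \<le> b i" for n i by (metis abs_le_iff minus_le_iff)
  hence "\<forall>n. xs n \<in> PiE UNIV (\<lambda>i. {- b i .. b i})" by auto
  then obtain x sg where sg: "strict_mono sg" and "(xs \<circ> sg) \<longlonglongrightarrow> x"
    using compact_PiE_Icc[THEN compact_imp_seq_compact] unfolding seq_compact_def by metis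
  hence lim: "\<forall>i. (\<lambda>n. xs (sg n) i) \<longlonglongrightarrow> x i"
    using tendsto_fun_iff[of "xs \<circ> sg" x sequentially] by (simp add: comp_def)
  have "birkhoff (xs (sg n))" for n using ordered_in_Bbar[OF xs(2)] by (simp add: Bbar_def)
  hence "birkhoff x"
    using closed_sequentially[OF closed_birkhoff, of "xs \<circ> sg" x] \<open>(xs \<circ> sg) \<longlonglongrightarrow> x\<close> by simp
  moreover have "\<bar>x (i + k) - x i - ip w k\<bar> \<le> 1" for i k
  proof (rule LIMSEQ_le_const2)
    show "(\<lambda>n. \<bar>xs (sg n) (i + k) - xs (sg n) i - ip (approx_vec w (sg n)) k\<bar>)
        \<longlonglongrightarrow> \<bar>x (i + k) - x i - ip w k\<bar>"
      using lim LIMSEQ_subseq_LIMSEQ[OF approx_vec_tendsto sg]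
      by (intro tendsto_rabs tendsto_diff) (auto simp: comp_def)
  qed (use ordered_increment[OF xs(2)] in blast)
  moreover have "locally_minimal x"
  proof (rule locally_minimal_lim[OF lim])
    fix A :: "(int^'d) set" and y :: "int^'d \<Rightarrow> real" assume "finite A" "\<forall>i. i \<notin> A \<longrightarrow> y i = 0"
    hence "\<forall>\<^sub>F n in sequentially. 2 * r < real_of_int (approx_den (sg n)) \<and>
        deep_in (approx_den (sg n)) (\<chi> m. - (int (sg n) + 1)) A"
      using eventually_subseq[OF sg eventually_deep_in_centred_window] by blast
    thus "\<forall>\<^sub>F n in sequentially. 0 \<le> action_change (xs (sg n)) A y"
      by (rule eventually_mono)
        (use periodic_minimizer_window[OF approx_den_pos _ xs(1) \<open>\<forall>i. i \<notin> A \<longrightarrow> y i = 0\<close>]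
         in blast)
  qed
  ultimately show ?thesis by blast
qed

text \<open>The main result in locale form: the infimum construction applied to the
  translates of the Birkhoff local minimizer produces an ordered one.\<close>
theorem birkhoff_global_minimizer_exists: "\<exists>x\<in>Bbar w. global_minimizer S r x"
proof -
  obtain x where lm: "locally_minimal x" and bk: "birkhoff x"
    and incr: "\<And>i k. \<bar>x (i + k) - x i - ip w k\<bar> \<le> 1"
    using birkhoff_local_minimizer_exists by blast
  define G where "G a \<longleftrightarrow> (\<exists>h\<in>nonneg_shifts w. a = tau (fst h) (snd h) x)" for a
  have "\<exists>z. locally_minimal z \<and> (\<forall>h\<in>nonneg_shifts w. z \<le> tau (fst h) (snd h) z)"
  proof (rule ordered_infimum[where G = G and C = 1])
    show "G (\<lambda>i. min (a i) (b i))" if "G a" "G b" for a b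
    proof -
      have "a \<le> b \<or> b \<le> a"
        using that birkhoff_translates_comparable[OF bk] unfolding G_def by blast
      moreover have "a \<le> b \<Longrightarrow> (\<lambda>i. min (a i) (b i)) = a"
        by (rule ext) (simp add: le_fun_def min_absorb1)
      moreover have "b \<le> a \<Longrightarrow> (\<lambda>i. min (a i) (b i)) = b"
        by (rule ext) (simp add: le_fun_def min_absorb2)
      ultimately have "(\<lambda>i. min (a i) (b i)) = a \<or> (\<lambda>i. min (a i) (b i)) = b" by blast
      thus ?thesis using that by metis
    qed
    show "locally_minimal z" if g: "\<forall>N. G (g N)" and lim: "\<forall>i. (\<lambda>N. g N i) \<longlonglongrightarrow> z i" for g z
    proof (rule locally_minimal_lim[OF lim])
      have "locally_minimal (g N)" for N
      proof -
        obtain h where "g N = tau (fst h) (snd h) x" using g unfolding G_def by blast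
        thus ?thesis using locally_minimal_tau[OF lm] by simp
      qed
      thus "finite A \<Longrightarrow> \<forall>i. i \<notin> A \<longrightarrow> y i = 0 \<Longrightarrow>
          \<forall>\<^sub>F N in sequentially. 0 \<le> action_change (g N) A y" for A y
        unfolding locally_minimal_def by simp
    qed
    show "x i - 1 \<le> tau (fst h) (snd h) x i" if "h \<in> nonneg_shifts w" for h i
      using that incr[of i "fst h"] by (simp add: nonneg_shifts_def tau_def abs_le_iff)
  qed (auto simp: G_def nonneg_shifts_monoid)
  then obtain z where "locally_minimal z" "ordered w z" using ordered_iff_nonneg_shifts by blast
  thus ?thesis using ordered_in_Bbar global_minimizer_if_locally_minimal by blast
qed

end

theorem mainTheorem7:
  fixes S :: "int ^ 'd::finite \<Rightarrow> (int ^ 'd \<Rightarrow> real) \<Rightarrow> real"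
    and r :: real
  assumes A_r: "r > 0"
    and A_local: "\<And>j x y. (\<forall>k\<in>lball j r. x k = y k) \<Longrightarrow> S j x = S j y"
    and A_C2: "\<And>j. C2 (S j)"
    and B: "\<And>j k l x. S j (tau k l x) = S (j + k) x"
    and C_bdd: "\<And>j. \<exists>m. \<forall>x. S j x \<ge> m"
    and C_coerc: "\<And>j k. norm1 (k - j) = 1 \<Longrightarrow>
        filterlim (S j) at_top (filtercomap (\<lambda>x. \<bar>x k - x j\<bar>) at_top)"
    and D1: "\<And>i k j x. i \<noteq> k \<Longrightarrow> pd i (pd k (S j)) x \<le> 0"
    and D2: "\<And>i k x. norm1 (i - k) = 1 \<Longrightarrow> pd i (pd k (S i)) x < 0"
    and E: "\<exists>C. \<forall>i k j x. \<bar>pd i (pd k (S j)) x\<bar> \<le> C"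
  shows "\<forall>\<omega> :: real ^ 'd. \<exists>x\<in>Bbar \<omega>. global_minimizer S r x"
proof -
  interpret local_potentials S r
    by unfold_locales (fact A_r A_local A_C2 B C_bdd C_coerc D1)+
  show ?thesis using birkhoff_global_minimizer_exists by blast
qed

end
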